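(* Let $\mu\in(0,1/2]$. For every $(g_0,c_0)\in S$ there exists a smooth function $f:\mathbb R\to\mathbb R$ with $f(g_0)=c_0$ such that $$\frac{d}{dg}\Big|_{g=g_0}R_S(g,f(g))\neq0,$$ where $R_S(g,c)=2\sqrt{\frac{\sqrt{1-gc}}{g-c+2\sqrt{(1-2\mu)^2-gc}}}\,\frac{K(r_2)}{K(k_1)}$.
   Context: $c_J=-1-2\sqrt{\mu(1-\mu)}$, $c_h=-1+2\mu$. The region $S$ in the $(g,c)$-plane is $S=\{c<c_J,\ -c-2<g<-c-2(1-2\mu)\}\cup\{c_J\le c<c_h,\ (1-2\mu)^2/c<g<-c-2(1-2\mu)\}$. $K(k)=\frac{\pi}{2}\sum_{n\ge0}\big(\frac{(2n-1)!!}{(2n)!!}\big)^2k^{2n}$ is the complete elliptic integral of the first kind, $k_1^2=\frac12\big(1-\frac{g-c}{2\sqrt{1-gc}}\big)$, $r_2^2=\frac{g-c-2\sqrt{(1-2\mu)^2-gc}}{g-c+2\sqrt{(1-2\mu)^2-gc}}$. $R_S$ is the rotation function (ratio of $\eta$- to $\xi$-period) of the Euler problem with mass ratio $\mu$ in the region $S$. *)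

theory Defs
  imports "HOL-Analysis.Analysis"
begin

text \<open>Double factorial, with the convention (-1)!! = 0!! = 1 (note 2*0-1 = 0 on nat).\<close>
fun dfact :: "nat \<Rightarrow> nat" where
  "dfact 0 = 1"
| "dfact (Suc 0) = 1"
| "dfact (Suc (Suc n)) = Suc (Suc n) * dfact n"

definition ellK :: "real \<Rightarrow> real" where
  "ellK k = pi / 2 * (\<Sum>n. (real (dfact (2*n - 1)) / real (dfact (2*n)))^2 * k^(2*n))"

definition cJ :: "real \<Rightarrow> real" where
  "cJ \<mu> = -1 - 2 * sqrt (\<mu> * (1 - \<mu>))"

definition ch :: "real \<Rightarrow> real" where
  "ch \<mu> = -1 + 2 * \<mu>"

definition regionS :: "real \<Rightarrow> (real \<times> real) set" where
  "regionS \<mu> =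
     {(g, c). c < cJ \<mu> \<and> -c - 2 < g \<and> g < -c - 2 * (1 - 2*\<mu>)}
   \<union> {(g, c). cJ \<mu> \<le> c \<and> c < ch \<mu> \<and> (1 - 2*\<mu>)^2 / c < g \<and> g < -c - 2 * (1 - 2*\<mu>)}"

definition k1sq :: "real \<Rightarrow> real \<Rightarrow> real" where
  "k1sq g c = (1 - (g - c) / (2 * sqrt (1 - g*c))) / 2"

definition r2sq :: "real \<Rightarrow> real \<Rightarrow> real \<Rightarrow> real" where
  "r2sq \<mu> g c = (g - c - 2 * sqrt ((1 - 2*\<mu>)^2 - g*c)) / (g - c + 2 * sqrt ((1 - 2*\<mu>)^2 - g*c))"

definition rotS :: "real \<Rightarrow> real \<Rightarrow> real \<Rightarrow> real" where
  "rotS \<mu> g c = 2 * sqrt (sqrt (1 - g*c) / (g - c + 2 * sqrt ((1 - 2*\<mu>)^2 - g*c)))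
      * ellK (sqrt (r2sq \<mu> g c)) / ellK (sqrt (k1sq g c))"

definition smooth_real :: "(real \<Rightarrow> real) \<Rightarrow> bool" where
  "smooth_real f \<longleftrightarrow> (\<exists>D :: nat \<Rightarrow> real \<Rightarrow> real. D 0 = f \<and>
      (\<forall>n x. (D n has_real_derivative D (Suc n) x) (at x)))"

end

theory Submission
  imports Defs
begin

text \<open>
  Write \<open>m = 1 - 2\<mu>\<close> and use the coordinates \<open>u = g - c\<close>, \<open>p = g c\<close>, in which \<open>R\<^sub>S\<close> becomes
  \<open>rotUP (m\<^sup>2) u p\<close>; the map \<open>(g, c) \<mapsto> (u, p)\<close> is a local diffeomorphism on \<open>S\<close> because
  \<open>g + c \<noteq> 0\<close> there. The modulus \<open>k\<^sub>1\<close> depends only on \<open>\<kappa> = u / (2 \<surd>(1 - p))\<close>, and on a level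
  curve of \<open>\<kappa>\<close> the function is \<open>\<surd>(2/(\<kappa>+\<rho>)) K(r\<^sub>2) / K(k\<^sub>1)\<close> with
  \<open>\<rho> = \<surd>((m\<^sup>2 - p)/(1 - p))\<close> and \<open>r\<^sub>2\<^sup>2 = (\<kappa>-\<rho>)/(\<kappa>+\<rho>)\<close>. Since the series of \<open>K\<close> has nonnegative
  coefficients, this decreases strictly in \<open>\<rho>\<close>, while \<open>\<rho>\<close> decreases strictly in \<open>p\<close>. So the
  differential of \<open>R\<^sub>S\<close> is nonzero, and it cannot vanish on both directions \<open>(1, 0)\<close> and \<open>(1, 1)\<close>:
  one of the lines \<open>c = c\<^sub>0\<close>, \<open>c - c\<^sub>0 = g - g\<^sub>0\<close> serves as \<open>f\<close>.
\<close>

lemma dfact_pos: "0 < dfact n"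
  by (induction n rule: dfact.induct) auto

lemma dfact_le_Suc: "dfact n \<le> dfact (Suc n)"
proof (induction n rule: dfact.induct)
  case (3 n)
  then show ?case
    using mult_le_mono[of "Suc (Suc n)" "Suc (Suc (Suc n))" "dfact n" "dfact (Suc n)"] by simp
qed simp_all

definition ellK_coeff :: "nat \<Rightarrow> real" where
  "ellK_coeff n = (real (dfact (2*n - 1)) / real (dfact (2*n)))^2"

lemma ellK_coeff_nonneg: "0 \<le> ellK_coeff n"
  by (simp add: ellK_coeff_def)

lemma ellK_coeff_le_1: "ellK_coeff n \<le> 1"
proof -
  have "dfact (2*n - 1) \<le> dfact (2*n)"
    using dfact_le_Suc[of "2*n - 1"] by (cases n) simp_all
  then show ?thesis
    using dfact_pos[of "2*n"] by (simp add: ellK_coeff_def power_le_one divide_le_eq)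
qed

text \<open>\<open>ellKm m\<close> is \<open>K\<close> as a function of the parameter \<open>m = k\<^sup>2\<close>, and \<open>ellKm'\<close> its derivative.\<close>

definition ellKm :: "real \<Rightarrow> real" where
  "ellKm m = pi / 2 * (\<Sum>n. ellK_coeff n * m^n)"

definition ellKm' :: "real \<Rightarrow> real" where
  "ellKm' m = pi / 2 * (\<Sum>n. diffs ellK_coeff n * m^n)"

lemma summable_ellK_coeff: "\<bar>m\<bar> < 1 \<Longrightarrow> summable (\<lambda>n. ellK_coeff n * m^n)"
  by (rule summable_comparison_test[where g = "\<lambda>n. \<bar>m\<bar>^n"])
     (use ellK_coeff_nonneg ellK_coeff_le_1 in
       \<open>auto simp: abs_mult power_abs summable_geometric intro!: mult_left_le_one_le\<close>)

lemma ellK_sqrt: "0 \<le> m \<Longrightarrow> ellK (sqrt m) = ellKm m"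
  by (simp add: ellK_def ellKm_def ellK_coeff_def power_mult)

lemma ellKm_pos:
  assumes "0 \<le> m" "m < 1"
  shows "0 < ellKm m"
proof -
  have "0 < (\<Sum>n. ellK_coeff n * m^n)"
    by (rule suminf_pos2[where i=0])
       (use assms summable_ellK_coeff[of m] ellK_coeff_nonneg in \<open>auto simp: ellK_coeff_def\<close>)
  then show ?thesis by (simp add: ellKm_def)
qed

lemma ellKm'_nonneg:
  assumes "0 \<le> m" "m < 1"
  shows "0 \<le> ellKm' m"
proof -
  have "summable (\<lambda>n. diffs ellK_coeff n * m^n)"
    by (rule termdiff_converges[where K=1]) (use assms summable_ellK_coeff in auto)
  then have "0 \<le> (\<Sum>n. diffs ellK_coeff n * m^n)"
    by (rule suminf_nonneg) (use assms in \<open>auto simp: diffs_def ellK_coeff_nonneg\<close>)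
  then show ?thesis by (simp add: ellKm'_def)
qed

lemma ellKm_has_derivative: "\<bar>m\<bar> < 1 \<Longrightarrow> (ellKm has_real_derivative ellKm' m) (at m)"
  unfolding ellKm_def[abs_def] ellKm'_def
  by (intro DERIV_cmult termdiffs_strong'[where K=1]) (auto intro: summable_ellK_coeff)

lemma ellK_sqrt_has_derivative:
  assumes "0 < m" "m < 1"
  shows "((\<lambda>m. ellK (sqrt m)) has_real_derivative ellKm' m) (at m)"
  using ellKm_has_derivative[of m] assms
  by (rule_tac has_field_derivative_transform_within_open[where S="{0<..}"])
     (auto simp: ellK_sqrt)

lemma has_derivative_ellK_sqrt [derivative_intros]:
  assumes "(f has_derivative f') (at x within S)" "0 < f x" "f x < 1"
  shows "((\<lambda>y. ellK (sqrt (f y))) has_derivative (\<lambda>h. f' h * ellKm' (f x))) (at x within S)"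
  using DERIV_compose_FDERIV[OF ellK_sqrt_has_derivative assms(1)] assms(2,3) by simp

lemma has_real_derivative_ellK_sqrt:
  assumes "(f has_real_derivative d) (at x)" "0 < f x" "f x < 1"
  shows "((\<lambda>y. ellK (sqrt (f y))) has_real_derivative ellKm' (f x) * d) (at x)"
  using DERIV_chain2[OF ellK_sqrt_has_derivative assms(1)] assms(2,3) by simp

definition rotUP :: "real \<Rightarrow> real \<Rightarrow> real \<Rightarrow> real" where
  "rotUP m2 u p = 2 * sqrt (sqrt (1 - p) / (u + 2 * sqrt (m2 - p)))
      * ellK (sqrt ((u - 2 * sqrt (m2 - p)) / (u + 2 * sqrt (m2 - p))))
      / ellK (sqrt ((1 - u / (2 * sqrt (1 - p))) / 2))"

lemma rotS_eq_rotUP: "rotS \<mu> g c = rotUP ((1 - 2*\<mu>)^2) (g - c) (g * c)"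
  by (simp add: rotS_def rotUP_def r2sq_def k1sq_def)

definition domUP :: "real \<Rightarrow> (real \<times> real) set" where
  "domUP m2 = {(u, p). p < m2 \<and> 2 * sqrt (m2 - p) < u \<and> u < 2 * sqrt (1 - p)}"

lemma domUP_D:
  assumes "m2 < 1" "(u, p) \<in> domUP m2"
  shows "0 < sqrt (m2 - p)" "0 < sqrt (1 - p)" "0 < u"
    "0 < (u - 2 * sqrt (m2 - p)) / (u + 2 * sqrt (m2 - p))"
    "(u - 2 * sqrt (m2 - p)) / (u + 2 * sqrt (m2 - p)) < 1"
    "0 < (1 - u / (2 * sqrt (1 - p))) / 2" "(1 - u / (2 * sqrt (1 - p))) / 2 < 1"
proof -
  have p: "p < m2" "2 * sqrt (m2 - p) < u" "u < 2 * sqrt (1 - p)"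
    using assms(2) by (auto simp: domUP_def)
  show s: "0 < sqrt (m2 - p)" and t: "0 < sqrt (1 - p)"
    using p assms(1) by auto
  show u: "0 < u" using p s by linarith
  show "0 < (u - 2 * sqrt (m2 - p)) / (u + 2 * sqrt (m2 - p))"
    "(u - 2 * sqrt (m2 - p)) / (u + 2 * sqrt (m2 - p)) < 1"
  proof -
    have "0 < u - 2 * sqrt (m2 - p)" "0 < u + 2 * sqrt (m2 - p)" using p s by linarith+
    then show "0 < (u - 2 * sqrt (m2 - p)) / (u + 2 * sqrt (m2 - p))"
      "(u - 2 * sqrt (m2 - p)) / (u + 2 * sqrt (m2 - p)) < 1"
      using s by (simp_all only: divide_pos_pos divide_less_eq_1_pos)
  qed
  show "0 < (1 - u / (2 * sqrt (1 - p))) / 2" "(1 - u / (2 * sqrt (1 - p))) / 2 < 1"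
  proof -
    have "0 < u / (2 * sqrt (1 - p))" "u / (2 * sqrt (1 - p)) < 1"
      using p t u by (simp_all only: divide_pos_pos divide_less_eq_1_pos mult_pos_pos zero_less_numeral)
    then show "0 < (1 - u / (2 * sqrt (1 - p))) / 2" "(1 - u / (2 * sqrt (1 - p))) / 2 < 1"
      by simp_all
  qed
qed

lemma rotUP_differentiable:
  assumes "m2 < 1" "(u, p) \<in> domUP m2"
  shows "\<exists>D. ((\<lambda>z. rotUP m2 (fst z) (snd z)) has_derivative D) (at (u, p))"
proof -
  note dom = domUP_D[OF assms]
  have nz: "ellK (sqrt ((1 - u / (2 * sqrt (1 - p))) / 2)) \<noteq> 0"
    using dom ellKm_pos[of "(1 - u / (2 * sqrt (1 - p))) / 2"] by (simp add: ellK_sqrt)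
  have pos: "0 < sqrt (1 - p) / (u + 2 * sqrt (m2 - p))"
    using dom(1-3) by (intro divide_pos_pos) linarith+
  have side: "0 < 1 - p" "0 < m2 - p" "u + 2 * sqrt (m2 - p) \<noteq> 0" "2 * sqrt (1 - p) \<noteq> 0"
    using dom(1-3) add_pos_pos[OF dom(3), of "2 * sqrt (m2 - p)"] by auto
  show ?thesis
    unfolding rotUP_def
    by (intro exI) (rule derivative_intros | simp only: fst_conv snd_conv dom nz pos side simp_thms)+
qed

definition rotKR :: "real \<Rightarrow> real \<Rightarrow> real" where
  "rotKR \<kappa> \<rho> = sqrt (2 / (\<kappa> + \<rho>)) * ellK (sqrt ((\<kappa> - \<rho>) / (\<kappa> + \<rho>))) / ellK (sqrt ((1 - \<kappa>) / 2))"

lemma rotUP_level_curve: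
  assumes "p < 1"
  shows "rotUP m2 (2 * \<kappa> * sqrt (1 - p)) p = rotKR \<kappa> (sqrt ((m2 - p) / (1 - p)))"
proof -
  define t where "t = sqrt (1 - p)"
  define \<rho> where "\<rho> = sqrt ((m2 - p) / (1 - p))"
  have t: "t \<noteq> 0" using assms by (simp add: t_def)
  have "sqrt (m2 - p) = \<rho> * t"
    using t by (simp add: \<rho>_def t_def real_sqrt_divide)
  then have num: "2 * \<kappa> * t - 2 * sqrt (m2 - p) = (2 * t) * (\<kappa> - \<rho>)"
    and den: "2 * \<kappa> * t + 2 * sqrt (m2 - p) = (2 * t) * (\<kappa> + \<rho>)"
    by (simp_all add: algebra_simps)
  have "2 * sqrt (t / ((2 * t) * (\<kappa> + \<rho>))) = sqrt (4 * (t / ((2 * t) * (\<kappa> + \<rho>))))"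
    by (simp only: real_sqrt_mult real_sqrt_four)
  also have "4 * (t / ((2 * t) * (\<kappa> + \<rho>))) = 2 / (\<kappa> + \<rho>)"
    using t by (simp add: divide_simps)
  finally have A: "2 * sqrt (t / ((2 * t) * (\<kappa> + \<rho>))) = sqrt (2 / (\<kappa> + \<rho>))" .
  have B: "(2 * t) * (\<kappa> - \<rho>) / ((2 * t) * (\<kappa> + \<rho>)) = (\<kappa> - \<rho>) / (\<kappa> + \<rho>)"
    using t by simp
  have C: "(1 - 2 * \<kappa> * t / (2 * t)) / 2 = (1 - \<kappa>) / 2"
    using t by simp
  show ?thesis
    unfolding rotUP_def rotKR_def t_def[symmetric] \<rho>_def[symmetric] num den A B C ..
qed

lemma rotKR_decreasing:
  assumes "0 < \<rho>" "\<rho> < \<kappa>" "\<kappa> < 1"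
  shows "\<exists>d<0. (rotKR \<kappa> has_real_derivative d) (at \<rho>)"
proof -
  define s where "s = \<kappa> + \<rho>"
  define r where "r = (\<kappa> - \<rho>) / s"
  define C where "C = ellK (sqrt ((1 - \<kappa>) / 2))"
  have s: "0 < s" using assms by (simp add: s_def)
  have r: "0 < r" "r < 1" using assms by (simp_all add: r_def s_def)
  have C: "0 < C" using assms ellKm_pos[of "(1 - \<kappa>) / 2"] by (simp add: C_def ellK_sqrt)
  have B: "0 < ellK (sqrt r)" using r ellKm_pos[of r] by (simp add: ellK_sqrt)
  have dA: "((\<lambda>\<rho>. sqrt (2 / (\<kappa> + \<rho>))) has_real_derivative - 1 / (s^2 * sqrt (2 / s))) (at \<rho>)"
    using s by (auto intro!: derivative_eq_intros simp: s_def field_simps power2_eq_square)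
  have dr: "((\<lambda>\<rho>. (\<kappa> - \<rho>) / (\<kappa> + \<rho>)) has_real_derivative - 2 * \<kappa> / s^2) (at \<rho>)"
    using s by (auto intro!: derivative_eq_intros simp: s_def field_simps power2_eq_square)
  have dB: "((\<lambda>\<rho>. ellK (sqrt ((\<kappa> - \<rho>) / (\<kappa> + \<rho>)))) has_real_derivative
      ellKm' r * (- 2 * \<kappa> / s^2)) (at \<rho>)"
    using has_real_derivative_ellK_sqrt[OF dr] r by (simp add: r_def s_def)
  have "(rotKR \<kappa> has_real_derivative
      (- 1 / (s^2 * sqrt (2 / s)) * ellK (sqrt r) + ellKm' r * (- 2 * \<kappa> / s^2) * sqrt (2 / s)) / C) (at \<rho>)"
    using DERIV_cdivide[OF DERIV_mult[OF dA dB], of C]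
    unfolding rotKR_def[abs_def] C_def by (simp add: r_def s_def)
  moreover have "(- 1 / (s^2 * sqrt (2 / s)) * ellK (sqrt r) + ellKm' r * (- 2 * \<kappa> / s^2) * sqrt (2 / s)) / C < 0"
    using s C B ellKm'_nonneg[of r] r assms
    by (intro divide_neg_pos add_neg_nonpos) (simp_all add: mult_nonneg_nonpos mult_nonpos_nonneg)
  ultimately show ?thesis by blast
qed

lemma rotUP_increasing_on_level_curve:
  assumes "p0 < m2" "m2 < 1" "sqrt ((m2 - p0) / (1 - p0)) < \<kappa>" "\<kappa> < 1"
  shows "\<exists>d>0. ((\<lambda>p. rotUP m2 (2 * \<kappa> * sqrt (1 - p)) p) has_real_derivative d) (at p0)"
proof -
  define \<rho>0 where "\<rho>0 = sqrt ((m2 - p0) / (1 - p0))"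
  have \<rho>0: "0 < \<rho>0" using assms by (simp add: \<rho>0_def)
  obtain d where d: "d < 0" "(rotKR \<kappa> has_real_derivative d) (at \<rho>0)"
    using rotKR_decreasing[OF \<rho>0] assms by (auto simp: \<rho>0_def)
  have d\<rho>: "((\<lambda>p. sqrt ((m2 - p) / (1 - p))) has_real_derivative (m2 - 1) / (1 - p0)^2 / (2 * \<rho>0)) (at p0)"
    using assms by (auto intro!: derivative_eq_intros simp: \<rho>0_def field_simps power2_eq_square)
  have "(m2 - 1) / (1 - p0)^2 / (2 * \<rho>0) < 0"
    using assms \<rho>0 by (simp add: divide_neg_pos)
  with d(1) have pos: "0 < d * ((m2 - 1) / (1 - p0)^2 / (2 * \<rho>0))"
    by (rule mult_neg_neg)
  have "((\<lambda>p. rotKR \<kappa> (sqrt ((m2 - p) / (1 - p)))) has_real_derivative d * ((m2 - 1) / (1 - p0)^2 / (2 * \<rho>0))) (at p0)"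
    using DERIV_chain2[OF d(2)[unfolded \<rho>0_def] d\<rho>] by simp
  then have "((\<lambda>p. rotUP m2 (2 * \<kappa> * sqrt (1 - p)) p) has_real_derivative d * ((m2 - 1) / (1 - p0)^2 / (2 * \<rho>0))) (at p0)"
    by (rule has_field_derivative_transform_within_open[where S = "{..<1}"])
       (use assms in \<open>auto simp: rotUP_level_curve\<close>)
  with pos show ?thesis by blast
qed

lemma rotUP_derivative_nonzero:
  assumes "m2 < 1" "(u0, p0) \<in> domUP m2"
    and D: "((\<lambda>z. rotUP m2 (fst z) (snd z)) has_derivative D) (at (u0, p0))"
  shows "\<exists>v. D v \<noteq> 0"
proof -
  define \<kappa> where "\<kappa> = u0 / (2 * sqrt (1 - p0))"
  define \<gamma> where "\<gamma> = (\<lambda>p::real. (2 * \<kappa> * sqrt (1 - p), p))"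
  note dom = domUP_D[OF assms(1,2)]
  have in_dom: "2 * sqrt (m2 - p0) < u0" "u0 < 2 * sqrt (1 - p0)" "p0 < m2"
    using assms(2) by (auto simp: domUP_def)
  have "\<gamma> p0 = (u0, p0)" using dom by (simp add: \<gamma>_def \<kappa>_def)
  have "\<exists>\<gamma>'. (\<gamma> has_derivative \<gamma>') (at p0)"
  proof -
    have "0 < 1 - p0" using in_dom assms(1) by simp
    then show ?thesis
      unfolding \<gamma>_def by (intro exI) (rule derivative_intros | simp only: snd_conv)+
  qed
  then obtain \<gamma>' where \<gamma>': "(\<gamma> has_derivative \<gamma>') (at p0)" ..
  have comp: "((\<lambda>p. rotUP m2 (fst (\<gamma> p)) (snd (\<gamma> p))) has_derivative (\<lambda>h. D (\<gamma>' h))) (at p0)"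
    using has_derivative_compose[OF \<gamma>', of "\<lambda>z. rotUP m2 (fst z) (snd z)" D] D \<open>\<gamma> p0 = (u0, p0)\<close>
    by simp
  obtain d where "0 < d"
    and d: "((\<lambda>p. rotUP m2 (fst (\<gamma> p)) (snd (\<gamma> p))) has_real_derivative d) (at p0)"
  proof -
    have "sqrt ((m2 - p0) / (1 - p0)) = sqrt (m2 - p0) / sqrt (1 - p0)"
      by (simp add: real_sqrt_divide)
    also have "\<dots> = 2 * sqrt (m2 - p0) / (2 * sqrt (1 - p0))"
      by simp
    also have "\<dots> < \<kappa>"
      unfolding \<kappa>_def using in_dom(1) dom(2) by (intro divide_strict_right_mono) simp_all
    finally have "sqrt ((m2 - p0) / (1 - p0)) < \<kappa>" .
    moreover have "\<kappa> < 1"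
      unfolding \<kappa>_def using in_dom dom by (simp add: divide_less_eq_1_pos)
    ultimately show ?thesis
      using that rotUP_increasing_on_level_curve[OF in_dom(3) assms(1)] by (auto simp: \<gamma>_def)
  qed
  have "(\<lambda>h. D (\<gamma>' h)) = (\<lambda>h. d * h)"
    using comp d unfolding has_field_derivative_def by (rule has_derivative_unique)
  then have "D (\<gamma>' 1) = d" by (metis mult.right_neutral)
  with \<open>0 < d\<close> show ?thesis by (metis less_irrefl)
qed

lemma rotS_has_derivative_along_line:
  assumes "((\<lambda>z. rotUP ((1 - 2*\<mu>)^2) (fst z) (snd z)) has_derivative D) (at (g0 - c0, g0 * c0))"
  shows "((\<lambda>g. rotS \<mu> g (c0 + \<sigma> * (g - g0))) has_real_derivative D (1 - \<sigma>, c0 + \<sigma> * g0)) (at g0)"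
proof -
  have "((\<lambda>g. (g - (c0 + \<sigma> * (g - g0)), g * (c0 + \<sigma> * (g - g0)))) has_derivative
      (\<lambda>h. h *\<^sub>R (1 - \<sigma>, c0 + \<sigma> * g0))) (at g0)"
    by (rule derivative_eq_intros refl)+ (auto simp: fun_eq_iff algebra_simps)
  from has_derivative_compose[OF this, of "\<lambda>z. rotUP ((1 - 2*\<mu>)^2) (fst z) (snd z)" D]
  have "((\<lambda>g. rotS \<mu> g (c0 + \<sigma> * (g - g0))) has_derivative (\<lambda>h. D (h *\<^sub>R (1 - \<sigma>, c0 + \<sigma> * g0)))) (at g0)"
    using assms by (simp add: rotS_eq_rotUP)
  moreover have "(\<lambda>h. D (h *\<^sub>R (1 - \<sigma>, c0 + \<sigma> * g0))) = (\<lambda>h. D (1 - \<sigma>, c0 + \<sigma> * g0) * h)"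
    by (rule ext) (simp only: linear_scale[OF has_derivative_linear[OF assms]] real_scaleR_def mult.commute)
  ultimately show ?thesis
    by (simp add: has_field_derivative_def)
qed

lemma linear_eq_0_of_vanishing_on_basis:
  fixes L :: "real \<times> real \<Rightarrow> real"
  assumes "linear L" "L (1, c) = 0" "L (0, s) = 0" "s \<noteq> 0"
  shows "L v = 0"
proof -
  obtain a b where v: "v = (a, b)" by fastforce
  have "v = a *\<^sub>R (1, c) + ((b - a * c) / s) *\<^sub>R (0, s)"
    using assms(4) by (simp add: v)
  then have "L v = a * L (1, c) + ((b - a * c) / s) * L (0, s)"
    by (simp only: linear_add[OF assms(1)] linear_scale[OF assms(1)] real_scaleR_def)
  with assms(2,3) show ?thesis by simp
qed

lemma smooth_real_affine: "smooth_real (\<lambda>x. c + s * (x - x0))"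
  unfolding smooth_real_def
proof (intro exI conjI allI)
  let ?D = "\<lambda>n::nat. case n of 0 \<Rightarrow> (\<lambda>x. c + s * (x - x0)) | Suc 0 \<Rightarrow> (\<lambda>_. s) | _ \<Rightarrow> (\<lambda>_. 0)"
  show "?D 0 = (\<lambda>x. c + s * (x - x0))" by simp
  fix n x
  show "(?D n has_real_derivative ?D (Suc n) x) (at x)"
    by (cases n rule: nat.exhaust[case_product nat.exhaust])
       (auto intro!: derivative_eq_intros split: nat.split)
qed

lemma regionS_bounds:
  fixes \<mu> g c :: real
  assumes "0 < \<mu>" "\<mu> \<le> 1/2" "(g, c) \<in> regionS \<mu>"
  shows "g * c < (1 - 2*\<mu>)^2" "-2 < g + c" "g + c < -2 * (1 - 2*\<mu>)" "c < g"
proof -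
  define m where "m = 1 - 2*\<mu>"
  define q where "q = sqrt (\<mu> * (1 - \<mu>))"
  have m: "0 \<le> m" using assms(2) by (simp add: m_def)
  have q: "0 \<le> q" "q^2 = \<mu> * (1 - \<mu>)" using assms(1,2) by (simp_all add: q_def)
  then have m2: "m^2 = 1 - 4 * q^2" by (simp add: m_def power2_eq_square algebra_simps)
  have "\<mu> * (2 * \<mu>) \<le> \<mu> * 1" using assms(1,2) by (intro mult_left_mono) auto
  then have "\<mu>^2 \<le> q^2" using q(2) by (simp add: power2_eq_square algebra_simps)
  then have \<mu>q: "\<mu> \<le> q" using q(1) by (rule power2_le_imp_le)
  have sq: "(c + 1)^2 = c^2 + 2 * c + 1" "(2 * q)^2 = 4 * q^2"
    by (simp_all add: power2_eq_square algebra_simps)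
  have "g * c < m^2 \<and> -2 < g + c \<and> g + c < -2 * m \<and> c < g"
  proof (cases "c < cJ \<mu>")
    case True
    then have c: "c < -1 - 2 * q" "-c - 2 < g" "g < -c - 2 * m"
      using assms(3) unfolding regionS_def cJ_def q_def m_def by auto
    have "g * c < (-c - 2) * c" using c q(1) by (intro mult_strict_right_mono_neg) auto
    then have "g * c < - (c^2) - 2 * c" by (simp add: power2_eq_square algebra_simps)
    moreover have "(2 * q)^2 < (c + 1)^2"
      using c(1) q(1) by (intro power2_strict_mono) auto
    ultimately have "g * c < m^2" using m2 sq by linarith
    with c q(1) show ?thesis by linarith
  next
    case False
    then have c: "-1 - 2 * q \<le> c" "c < -m" "m^2 / c < g" "g < -c - 2 * m"
      using assms(3) unfolding regionS_def cJ_def ch_def q_def m_def by auto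
    have c0: "c < 0" using c(2) m by linarith
    have "g * c < m^2" using c(3) c0 by (simp add: divide_less_eq)
    moreover have "c < m^2 / c"
    proof -
      have "m^2 < c^2" using c(2) m by (intro power2_strict_mono) auto
      with c0 show ?thesis by (simp add: less_divide_eq power2_eq_square)
    qed
    moreover have "-2 \<le> m^2 / c + c"
    proof -
      have "\<bar>c + 1\<bar> \<le> 2 * q" using c(1,2) \<mu>q m_def by (simp add: abs_le_iff)
      then have "(c + 1)^2 \<le> (2 * q)^2" using q(1) by (intro power2_mono) simp
      then have "c^2 + 2 * c + m^2 \<le> 0" using m2 sq by linarith
      then have "0 \<le> (c^2 + 2 * c + m^2) / c" using c0 by (rule divide_nonpos_neg)
      also have "\<dots> = m^2 / c + c + 2" using c0 by (simp add: field_simps power2_eq_square)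
      finally show ?thesis by linarith
    qed
    ultimately show ?thesis using c by linarith
  qed
  then show "g * c < (1 - 2*\<mu>)^2" "-2 < g + c" "g + c < -2 * (1 - 2*\<mu>)" "c < g"
    by (simp_all add: m_def)
qed

lemma mem_domUP:
  fixes m g c :: real
  assumes "0 \<le> m" "g * c < m^2" "2 * m < -(g + c)" "-(g + c) < 2" "c < g"
  shows "(g - c, g * c) \<in> domUP (m^2)"
proof -
  have "(2 * m)^2 < (g + c)^2" using assms(1,3) by (intro power2_strict_mono) auto
  moreover have "(g + c)^2 < 2^2" using assms(1,3,4) by (intro power2_strict_mono) auto
  moreover have "((g - c) / 2)^2 = (g + c)^2 / 4 - g * c"
    by (simp add: power_divide power2_eq_square field_simps)
  ultimately have "m^2 - g * c < ((g - c) / 2)^2" "((g - c) / 2)^2 < 1 - g * c"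
    by (simp_all add: power_mult_distrib)
  then have "sqrt (m^2 - g * c) < (g - c) / 2" "(g - c) / 2 < sqrt (1 - g * c)"
    using assms(5) by (intro real_less_lsqrt real_less_rsqrt; simp)+
  with assms(2) show ?thesis by (simp add: domUP_def)
qed

theorem mainTheorem6:
  fixes \<mu> g0 c0 :: real
  assumes "0 < \<mu>" and "\<mu> \<le> 1/2"
    and "(g0, c0) \<in> regionS \<mu>"
  shows "\<exists>f. smooth_real f \<and> f g0 = c0 \<and>
           (\<exists>D. ((\<lambda>g. rotS \<mu> g (f g)) has_real_derivative D) (at g0) \<and> D \<noteq> 0)"
proof -
  define m2 where "m2 = (1 - 2*\<mu>)^2"
  note bounds = regionS_bounds[OF assms]
  have "m2 < 1" using assms(1,2) by (simp add: m2_def abs_square_less_1)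
  have dom: "(g0 - c0, g0 * c0) \<in> domUP m2"
    unfolding m2_def using assms(2) bounds by (intro mem_domUP) auto
  obtain D where D: "((\<lambda>z. rotUP m2 (fst z) (snd z)) has_derivative D) (at (g0 - c0, g0 * c0))"
    using rotUP_differentiable[OF \<open>m2 < 1\<close> dom] by blast
  have "c0 + g0 \<noteq> 0" using assms(2) bounds(3) by (simp add: algebra_simps)
  then have "D (1, c0) \<noteq> 0 \<or> D (0, c0 + g0) \<noteq> 0"
    using rotUP_derivative_nonzero[OF \<open>m2 < 1\<close> dom D]
      linear_eq_0_of_vanishing_on_basis[OF has_derivative_linear[OF D]] by blast
  then obtain \<sigma> where "D (1 - \<sigma>, c0 + \<sigma> * g0) \<noteq> 0"
    by (metis add_0_right diff_0_right diff_self mult_1 mult_zero_left)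
  moreover have "((\<lambda>g. rotS \<mu> g (c0 + \<sigma> * (g - g0))) has_real_derivative D (1 - \<sigma>, c0 + \<sigma> * g0)) (at g0)"
    using D unfolding m2_def by (rule rotS_has_derivative_along_line)
  ultimately show ?thesis
    using smooth_real_affine[of c0 \<sigma> g0] by auto
qed

end
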